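(* Let $1<p<\infty$ and let $f\in L_1([-\pi,\pi])$ have Fourier series $\sum_{k\in\mathbb Z}a_ke^{ikx}$ (no monotonicity assumption). Then $$J_p^*(f)\lesssim I_p(f),$$ with a constant depending only on $p$.
   Context: $p'=p/(p-1)$; $a_k=\frac1{2\pi}\int_{-\pi}^\pi f(x)e^{-ikx}dx$. Put $|\Delta a_k|=|a_k-a_{k+1}|$ for $k>0$, $|\Delta a_k|=|a_k-a_{k-1}|$ for $k<0$, $|\Delta a_0|=|a_0-a_1|+|a_0-a_{-1}|$; $\Theta_k(f)=\sum_{[2^{k-1}]\le|m|<2^k}|\Delta a_m|$ for $k\ge0$ ($[\cdot]$ the floor function), and $I_p(f)=\big(\sum_{k=0}^\infty(2^{k/p'}\Theta_k(f))^p\big)^{1/p}$. Let $\{a_k^*\}_{k\in\mathbb Z}$ be the symmetric nonincreasing rearrangement of $\{|a_k|\}$, i.e. the values $|a_k|$ rearranged nonincreasingly and placed so that $a_0^*\ge a_{-1}^*\ge a_1^*\ge a_{-2}^*\ge a_2^*\ge\cdots$, and $J_p^*(f)=\big(\sum_{k\in\mathbb Z}(|k|+1)^{p-2}(a_k^* )^p\big)^{1/p}$. *)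

theory Defs
  imports "HOL-Analysis.Analysis"
begin

definition fourier_coeff :: "(real \<Rightarrow> complex) \<Rightarrow> int \<Rightarrow> complex" where
  "fourier_coeff f k = (1 / (2 * pi)) *
     set_lebesgue_integral lborel {-pi..pi} (\<lambda>x. f x * exp (- \<i> * of_int k * of_real x))"

definition delta_coeff :: "(int \<Rightarrow> complex) \<Rightarrow> int \<Rightarrow> real" where
  "delta_coeff a k =
     (if k > 0 then cmod (a k - a (k + 1))
      else if k < 0 then cmod (a k - a (k - 1))
      else cmod (a 0 - a 1) + cmod (a 0 - a (-1)))"

text \<open>Theta_k: sum over floor(2^(k-1)) <= |m| < 2^k; note floor(2^(k-1)) = 2^k div 2.\<close>
definition Theta :: "(int \<Rightarrow> complex) \<Rightarrow> nat \<Rightarrow> real" where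
  "Theta a k = (\<Sum>m\<in>{m::int. (2::int)^k div 2 \<le> \<bar>m\<bar> \<and> \<bar>m\<bar> < 2^k}. delta_coeff a m)"

definition conj_exp :: "real \<Rightarrow> real" where
  "conj_exp p = p / (p - 1)"

definition lp_root :: "real \<Rightarrow> (nat \<Rightarrow> real) \<Rightarrow> ennreal" where
  "lp_root p g = (if summable g then ennreal ((\<Sum>n. g n) powr (1 / p)) else top)"

definition I_p :: "real \<Rightarrow> (real \<Rightarrow> complex) \<Rightarrow> ennreal" where
  "I_p p f = lp_root p (\<lambda>k. (2 powr (real k / conj_exp p) * Theta (fourier_coeff f) k) powr p)"

text \<open>n-th largest value (n = 0,1,2,...) of the family |a_k|, via the distribution function.\<close>
definition decr_rearr :: "(int \<Rightarrow> real) \<Rightarrow> nat \<Rightarrow> real" where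
  "decr_rearr b n = Inf {t. t \<ge> 0 \<and> finite {k. b k > t} \<and> card {k. b k > t} \<le> n}"

definition sym_index :: "nat \<Rightarrow> int" where
  "sym_index n = (if even n then int (n div 2) else - int ((n + 1) div 2))"

definition sym_rearr :: "(int \<Rightarrow> complex) \<Rightarrow> int \<Rightarrow> real" where
  "sym_rearr a k = decr_rearr (\<lambda>j. cmod (a j)) (THE n. sym_index n = k)"

definition J_p_star :: "real \<Rightarrow> (real \<Rightarrow> complex) \<Rightarrow> ennreal" where
  "J_p_star p f = lp_root p (\<lambda>n. let k = sym_index n in
      (real_of_int (\<bar>k\<bar> + 1)) powr (p - 2) * (sym_rearr (fourier_coeff f) k) powr p)"

end

theory Submission
  imports Defs
begin

text \<open>
  For integrable f the Cesaro means of a_N, a_(N+1), ... tend to 0 (dominated convergence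
  against the normalised geometric kernel), so |a_N| is at most the total variation of the tail
  a_N, a_(N+1), ...  Hence |a_k| <= B |k| with B m = sum_(|j| >= m) |Delta a_j| nonincreasing,
  which forces a*_k <= B |k| as well. Grouping the series for J_p^*(f)^p into dyadic blocks
  bounds it by a multiple of sum_j 2^(j(p-1)) T_j^p, where T_j = sum_(i >= j) Theta_i, and a
  discrete Hardy inequality (Jensen's inequality with geometric weights on each tail) bounds
  that by a multiple of I_p(f)^p.
\<close>

section \<open>A discrete Hardy inequality\<close>

lemma powr_weighted_sum_le:
  fixes w x :: "'a \<Rightarrow> real"
  assumes S: "finite S" and w: "\<And>i. i \<in> S \<Longrightarrow> 0 \<le> w i" and x: "\<And>i. i \<in> S \<Longrightarrow> 0 \<le> x i"
    and W1: "sum w S \<le> 1" and p: "1 \<le> p"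
  shows "(\<Sum>i\<in>S. w i * x i) powr p \<le> (\<Sum>i\<in>S. w i * x i powr p)"
proof -
  define S' where "S' = {i\<in>S. w i > 0 \<and> x i > 0}"
  have fS': "finite S'" and S'S: "S' \<subseteq> S" using S by (auto simp: S'_def)
  have sum_S': "(\<Sum>i\<in>S. w i * x i) = (\<Sum>i\<in>S'. w i * x i)"
    by (rule sum.mono_neutral_right[OF S S'S]) (use w x in \<open>force simp: S'_def\<close>)
  have sum_S'_powr: "(\<Sum>i\<in>S'. w i * x i powr p) \<le> (\<Sum>i\<in>S. w i * x i powr p)"
    by (rule sum_mono2[OF S S'S]) (use w in auto)
  show ?thesis
  proof (cases "S' = {}")
    case True
    then show ?thesis unfolding sum_S' using w by (auto intro!: sum_nonneg)
  next
    case False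
    define W where "W = sum w S'"
    have W0: "W > 0" unfolding W_def using False fS' by (intro sum_pos) (auto simp: S'_def)
    have W1': "W \<le> 1" unfolding W_def using sum_mono2[OF S S'S, of w] w W1 by auto
    have jensen: "(\<Sum>i\<in>S'. (w i / W) *\<^sub>R x i) powr p \<le> (\<Sum>i\<in>S'. (w i / W) * x i powr p)"
    proof (rule convex_on_sum[OF fS' False powr_convex[OF p]])
      show "(\<Sum>i\<in>S'. w i / W) = 1" using W0 by (simp add: W_def sum_divide_distrib[symmetric])
    qed (use W0 in \<open>auto simp: S'_def\<close>)
    have "(\<Sum>i\<in>S. w i * x i) powr p = W powr p * (\<Sum>i\<in>S'. (w i / W) *\<^sub>R x i) powr p"
      unfolding sum_S' using W0 by (simp add: sum_distrib_left flip: powr_mult)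
    also have "\<dots> \<le> W powr p * (\<Sum>i\<in>S'. (w i / W) * x i powr p)"
      by (rule mult_left_mono[OF jensen]) simp
    also have "\<dots> = W powr (p - 1) * (\<Sum>i\<in>S'. w i * x i powr p)"
      using W0 by (simp add: powr_diff sum_distrib_left sum_divide_distrib[symmetric])
    also have "\<dots> \<le> (\<Sum>i\<in>S'. w i * x i powr p)"
    proof (rule mult_left_le_one_le)
      show "W powr (p - 1) \<le> 1" using powr_mono2[of "p - 1" W 1] W0 W1' p by simp
    qed (use w S'S in \<open>auto intro!: sum_nonneg\<close>)
    finally show ?thesis using sum_S'_powr by simp
  qed
qed

lemma powr_weighted_suminf_le:
  fixes w x :: "nat \<Rightarrow> real"
  assumes w: "\<And>i. 0 \<le> w i" and x: "\<And>i. 0 \<le> x i" and W1: "\<And>n. (\<Sum>i<n. w i) \<le> 1"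
    and p: "1 \<le> p" and s1: "summable (\<lambda>i. w i * x i)" and s2: "summable (\<lambda>i. w i * x i powr p)"
  shows "(\<Sum>i. w i * x i) powr p \<le> (\<Sum>i. w i * x i powr p)"
proof (rule LIMSEQ_le_const2)
  show "(\<lambda>n. (\<Sum>i<n. w i * x i) powr p) \<longlonglongrightarrow> (\<Sum>i. w i * x i) powr p"
    by (rule tendsto_powr2[OF summable_LIMSEQ[OF s1] tendsto_const])
       (use w x p in \<open>auto intro!: always_eventually sum_nonneg\<close>)
  have "(\<Sum>i<n. w i * x i) powr p \<le> (\<Sum>i. w i * x i powr p)" for n
  proof -
    have "(\<Sum>i<n. w i * x i) powr p \<le> (\<Sum>i<n. w i * x i powr p)"
      by (rule powr_weighted_sum_le) (use w x W1 p in auto)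
    also have "\<dots> \<le> (\<Sum>i. w i * x i powr p)"
      by (rule sum_le_suminf[OF s2]) (use w in auto)
    finally show ?thesis .
  qed
  then show "\<exists>N. \<forall>n\<ge>N. (\<Sum>i<n. w i * x i) powr p \<le> (\<Sum>i. w i * x i powr p)" by blast
qed

lemma powr_suminf_geometric_le:
  fixes y :: "nat \<Rightarrow> real"
  assumes q: "0 \<le> q" "q < 1" and p: "1 \<le> p" and y: "\<And>d. 0 \<le> y d"
    and s1: "summable (\<lambda>d. q ^ d * y d)" and s2: "summable (\<lambda>d. q ^ d * y d powr p)"
  shows "(\<Sum>d. q ^ d * y d) powr p \<le> (1 - q) powr (1 - p) * (\<Sum>d. q ^ d * y d powr p)"
proof -
  define w where "w d = (1 - q) * q ^ d" for d
  define x where "x d = y d / (1 - q)" for d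
  have wx: "w d * x d = q ^ d * y d" for d using q by (simp add: w_def x_def)
  have wxp: "w d * x d powr p = (1 - q) powr (1 - p) * (q ^ d * y d powr p)" for d
    using q by (simp add: w_def x_def powr_divide powr_diff)
  have "(\<Sum>d. w d * x d) powr p \<le> (\<Sum>d. w d * x d powr p)"
  proof (rule powr_weighted_suminf_le)
    show "(\<Sum>d<n. w d) \<le> 1" for n
      using q by (simp add: w_def flip: sum_distrib_left) (simp add: sum_gp_strict)
    show "summable (\<lambda>d. w d * x d powr p)" unfolding wxp by (intro summable_mult s2)
  qed (use q p y s1 in \<open>auto simp: w_def x_def wx\<close>)
  then show ?thesis
    unfolding wx wxp using suminf_mult[OF s2] by simp
qed

lemma summable_geometric_mult_of_powr:
  fixes y :: "nat \<Rightarrow> real"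
  assumes q: "0 \<le> q" "q < 1" and p: "1 \<le> p" and y: "\<And>k. 0 \<le> y k"
    and s: "summable (\<lambda>k. y k powr p)"
  shows "summable (\<lambda>k. q ^ k * y k)"
proof (rule summable_comparison_test')
  show "summable (\<lambda>k. q ^ k + y k powr p)" using q s by (intro summable_add summable_geometric) auto
  show "norm (q ^ k * y k) \<le> q ^ k + y k powr p" for k
  proof -
    have "y k \<le> 1 + y k powr p"
    proof (cases "y k \<le> 1")
      case True
      then show ?thesis using powr_ge_zero[of "y k" p] by linarith
    next
      case False
      then have "y k powr 1 \<le> y k powr p" by (intro powr_mono) (use p in auto)
      then show ?thesis by simp
    qed
    then have "q ^ k * y k \<le> q ^ k + q ^ k * y k powr p"
      using mult_left_mono[of _ _ "q ^ k"] q by (fastforce simp: algebra_simps)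
    also have "q ^ k * y k powr p \<le> y k powr p"
      using q by (simp add: mult_left_le_one_le power_le_one)
    finally show ?thesis using q y[of k] by simp
  qed
qed

lemma sum_suminf_geometric_shift_le:
  fixes g :: "nat \<Rightarrow> real"
  assumes q: "0 \<le> q" "q < 1" and g: "\<And>k. 0 \<le> g k" and s: "summable g"
  shows "(\<Sum>j\<le>L. \<Sum>d. q ^ d * g (d + j)) \<le> (\<Sum>k. g k) / (1 - q)"
proof -
  have sj: "summable (\<lambda>d. q ^ d * g (d + j))" for j
    by (rule summable_comparison_test'[OF summable_ignore_initial_segment[OF s, of j]])
       (use q g in \<open>auto simp: abs_mult mult_left_le_one_le power_le_one\<close>)
  have window: "(\<Sum>j\<le>L. g (d + j)) \<le> (\<Sum>k. g k)" for d
  proof -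
    have "(\<Sum>j\<le>L. g (d + j)) = sum g ((+) d ` {..L})"
      by (simp add: sum.reindex)
    also have "\<dots> \<le> (\<Sum>k. g k)" by (rule sum_le_suminf[OF s]) (auto simp: g)
    finally show ?thesis .
  qed
  have "(\<Sum>j\<le>L. \<Sum>d. q ^ d * g (d + j)) = (\<Sum>d. \<Sum>j\<le>L. q ^ d * g (d + j))"
    by (rule suminf_sum[symmetric]) (rule sj)
  also have "\<dots> \<le> (\<Sum>d. q ^ d * (\<Sum>k. g k))"
  proof (rule suminf_le)
    show "(\<Sum>j\<le>L. q ^ d * g (d + j)) \<le> q ^ d * (\<Sum>k. g k)" for d
      using window[of d] q by (simp add: mult_left_mono flip: sum_distrib_left)
  qed (use q in \<open>auto intro!: summable_sum sj summable_mult2 summable_geometric\<close>)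
  also have "\<dots> = (\<Sum>k. g k) / (1 - q)"
    using suminf_mult2[OF summable_geometric[of q]] suminf_geometric[of q] q by simp
  finally show ?thesis .
qed

lemma tail_sum_hardy_inequality:
  fixes \<theta> :: "nat \<Rightarrow> real" and c p :: real
  assumes c: "1 < c" and p: "1 \<le> p" and \<theta>: "\<And>k. 0 \<le> \<theta> k"
    and summ: "summable (\<lambda>k. (c ^ k * \<theta> k) powr p)"
  shows "(\<Sum>j\<le>L. (c ^ j * (\<Sum>d. \<theta> (d + j))) powr p)
           \<le> (1 - 1 / c) powr (- p) * (\<Sum>k. (c ^ k * \<theta> k) powr p)"
proof -
  define q where "q = 1 / c"
  define y where "y k = c ^ k * \<theta> k" for k
  have q: "0 \<le> q" "q < 1" using c by (auto simp: q_def)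
  have y: "0 \<le> y k" for k using c \<theta> by (simp add: y_def)
  have ys: "summable (\<lambda>k. y k powr p)" using summ by (simp add: y_def)
  have shift: "c ^ j * \<theta> (d + j) = q ^ d * y (d + j)" for d j
    using c by (simp add: q_def y_def power_add power_one_over)
  have s1: "summable (\<lambda>d. q ^ d * y (d + j))" for j
    by (rule summable_geometric_mult_of_powr[OF q p y summable_ignore_initial_segment[OF ys]])
  have s2: "summable (\<lambda>d. q ^ d * y (d + j) powr p)" for j
    by (rule summable_comparison_test'[OF summable_ignore_initial_segment[OF ys, of j]])
       (use q in \<open>auto simp: abs_mult mult_left_le_one_le power_le_one\<close>)
  have block: "(c ^ j * (\<Sum>d. \<theta> (d + j))) powr p
      \<le> (1 - q) powr (1 - p) * (\<Sum>d. q ^ d * y (d + j) powr p)" for j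
  proof -
    have "summable (\<lambda>d. c ^ j * \<theta> (d + j))" unfolding shift by (rule s1)
    then have "c ^ j * (\<Sum>d. \<theta> (d + j)) = (\<Sum>d. q ^ d * y (d + j))"
      using c by (simp add: summable_cmult_iff suminf_mult flip: shift)
    then show ?thesis
      using powr_suminf_geometric_le[OF q p y s1 s2] by simp
  qed
  have "(\<Sum>j\<le>L. (c ^ j * (\<Sum>d. \<theta> (d + j))) powr p)
      \<le> (1 - q) powr (1 - p) * (\<Sum>j\<le>L. \<Sum>d. q ^ d * y (d + j) powr p)"
    unfolding sum_distrib_left by (rule sum_mono) (rule block)
  also have "\<dots> \<le> (1 - q) powr (1 - p) * ((\<Sum>k. y k powr p) / (1 - q))"
    by (rule mult_left_mono[OF sum_suminf_geometric_shift_le[OF q _ ys]]) simp_all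
  also have "\<dots> = (1 - q) powr (- p) * (\<Sum>k. y k powr p)"
    using q by (simp add: powr_diff powr_minus divide_simps)
  finally show ?thesis by (simp add: q_def y_def)
qed

section \<open>Dyadic blocks\<close>

lemma sum_half_index_double:
  fixes h :: "nat \<Rightarrow> real"
  shows "(\<Sum>n<2 * M. h ((n + 1) div 2)) = 2 * (\<Sum>m<M. h m) - h 0 + h M"
proof (induction M)
  case (Suc M)
  have "(Suc (2 * M) + 1) div 2 = Suc M" "(2 * M + 1) div 2 = M" by presburger+
  then have "(\<Sum>n<2 * Suc M. h ((n + 1) div 2)) = (\<Sum>n<2 * M. h ((n + 1) div 2)) + h M + h (Suc M)"
    by simp
  then show ?case using Suc by simp
qed simp

lemma sum_half_index_le:
  fixes h :: "nat \<Rightarrow> real"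
  assumes h: "\<And>m. 0 \<le> h m"
  shows "(\<Sum>n<N. h ((n + 1) div 2)) \<le> 2 * (\<Sum>m<2 ^ N. h m)"
proof -
  have "(\<Sum>n<N. h ((n + 1) div 2)) \<le> (\<Sum>n<2 * N. h ((n + 1) div 2))"
    by (rule sum_mono2) (auto simp: h)
  also have "\<dots> = 2 * (\<Sum>m<N. h m) - h 0 + h N" by (rule sum_half_index_double)
  also have "\<dots> \<le> 2 * (\<Sum>m<Suc N. h m)" using h[of 0] h[of N] by simp
  also have "(\<Sum>m<Suc N. h m) \<le> (\<Sum>m<2 ^ N. h m)"
    by (rule sum_mono2) (auto simp: h Suc_leI less_exp)
  finally show ?thesis by simp
qed

lemma sum_lessThan_power2_dyadic:
  fixes h :: "nat \<Rightarrow> 'a :: comm_monoid_add"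
  shows "(\<Sum>m<2 ^ L. h m) = (\<Sum>j\<le>L. \<Sum>m\<in>{2 ^ j div 2..<2 ^ j}. h m)"
proof (induction L)
  case (Suc L)
  have "(\<Sum>m<2 ^ Suc L. h m) = (\<Sum>m<2 ^ L. h m) + (\<Sum>m\<in>{2 ^ L..<2 ^ Suc L}. h m)"
    by (simp add: lessThan_atLeast0 sum.atLeastLessThan_concat)
  then show ?case using Suc by simp
qed simp

lemma powr_le_of_half_le:
  fixes x y s :: real
  assumes y: "0 < y" and xy: "y / 2 \<le> x" "x \<le> y"
  shows "x powr s \<le> 2 powr \<bar>s\<bar> * y powr s"
proof (cases "s \<ge> 0")
  case True
  have "x powr s \<le> y powr s" by (rule powr_mono2) (use True y xy in auto)
  also have "\<dots> \<le> 2 powr \<bar>s\<bar> * y powr s"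
    using mult_right_mono[OF ge_one_powr_ge_zero[of 2 "\<bar>s\<bar>"], of "y powr s"] by simp
  finally show ?thesis .
next
  case False
  have "x powr s \<le> (y / 2) powr s" by (rule powr_mono2') (use False y xy in auto)
  also have "\<dots> = 2 powr \<bar>s\<bar> * y powr s" using False by (simp add: powr_divide powr_minus_divide)
  finally show ?thesis .
qed

lemma powr_two_power: "((2::real) ^ j) powr a = 2 powr (real j * a)"
  by (simp add: powr_powr flip: powr_realpow)

lemma two_power_mult_powr: "(2::real) ^ j * (2 ^ j) powr (p - 2) = 2 powr (real j * (p - 1))"
proof -
  have "(2::real) ^ j * (2 ^ j) powr (p - 2) = 2 powr real j * 2 powr (real j * (p - 2))"
    by (simp add: powr_two_power powr_realpow)
  also have "\<dots> = 2 powr (real j * (p - 1))"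
    by (simp only: powr_add[symmetric]) (simp add: algebra_simps)
  finally show ?thesis .
qed

lemma weighted_sum_dyadic_le:
  fixes B :: "nat \<Rightarrow> real" and p :: real
  assumes p: "0 \<le> p" and B0: "\<And>m. 0 \<le> B m" and B: "antimono B"
  shows "(\<Sum>m<2 ^ L. real (m + 1) powr (p - 2) * B m powr p)
           \<le> 2 powr \<bar>p - 2\<bar> * (\<Sum>j\<le>L. 2 powr (real j * (p - 1)) * B (2 ^ j div 2) powr p)"
proof -
  have block: "(\<Sum>m\<in>{2 ^ j div 2..<2 ^ j}. real (m + 1) powr (p - 2) * B m powr p)
      \<le> 2 powr \<bar>p - 2\<bar> * (2 powr (real j * (p - 1)) * B (2 ^ j div 2) powr p)" for j
  proof -
    define X where "X = 2 powr \<bar>p - 2\<bar> * ((2::real) ^ j) powr (p - 2) * B (2 ^ j div 2) powr p"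
    have "real (m + 1) powr (p - 2) * B m powr p \<le> X" if m: "m \<in> {2 ^ j div 2..<2 ^ j}" for m
    proof -
      have "(2::nat) ^ j \<le> 2 * (m + 1)" "m + 1 \<le> 2 ^ j" using m by auto
      then have "real (2 ^ j) \<le> real (2 * (m + 1))" "real (m + 1) \<le> real (2 ^ j)"
        by (simp_all only: of_nat_le_iff)
      then have "(2::real) ^ j / 2 \<le> real (m + 1)" "real (m + 1) \<le> 2 ^ j"
        by simp_all
      then have "real (m + 1) powr (p - 2) \<le> 2 powr \<bar>p - 2\<bar> * ((2::real) ^ j) powr (p - 2)"
        by (intro powr_le_of_half_le) auto
      moreover have "B m powr p \<le> B (2 ^ j div 2) powr p"
        using m B0 p by (intro powr_mono2 antimonoD[OF B]) auto
      ultimately show ?thesis unfolding X_def using B0 by (intro mult_mono) auto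
    qed
    then have "(\<Sum>m\<in>{2 ^ j div 2..<2 ^ j}. real (m + 1) powr (p - 2) * B m powr p)
        \<le> (\<Sum>m\<in>{2 ^ j div 2..<(2::nat) ^ j}. X)"
      by (rule sum_mono)
    also have "\<dots> \<le> 2 ^ j * X" by (simp add: X_def mult_right_mono)
    also have "\<dots> = 2 powr \<bar>p - 2\<bar> * ((2 ^ j * ((2::real) ^ j) powr (p - 2)) * B (2 ^ j div 2) powr p)"
      by (simp only: X_def mult_ac)
    also have "\<dots> = 2 powr \<bar>p - 2\<bar> * (2 powr (real j * (p - 1)) * B (2 ^ j div 2) powr p)"
      by (simp only: two_power_mult_powr)
    finally show ?thesis .
  qed
  show ?thesis
    unfolding sum_lessThan_power2_dyadic sum_distrib_left by (rule sum_mono) (rule block)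
qed

section \<open>The symmetric rearrangement\<close>

lemma decr_rearr_le_majorant:
  fixes b :: "int \<Rightarrow> real" and B :: "nat \<Rightarrow> real"
  assumes bB: "\<And>k. b k \<le> B (nat \<bar>k\<bar>)" and B0: "\<And>m. 0 \<le> B m" and B: "antimono B"
    and nm: "2 * m \<le> n + 1"
  shows "0 \<le> decr_rearr b n \<and> decr_rearr b n \<le> B m"
proof -
  define T where "T = {t. t \<ge> 0 \<and> finite {k. b k > t} \<and> card {k. b k > t} \<le> n}"
  have sub: "{k. b k > B m} \<subseteq> {- int m<..<int m}"
  proof
    fix k assume "k \<in> {k. b k > B m}"
    then have "\<not> m \<le> nat \<bar>k\<bar>" using bB[of k] antimonoD[OF B, of m "nat \<bar>k\<bar>"] by auto
    then show "k \<in> {- int m<..<int m}" by auto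
  qed
  then have "card {k. b k > B m} \<le> card {- int m<..<int m}" by (intro card_mono) auto
  also have "\<dots> \<le> n" using nm by simp
  finally have "B m \<in> T" using sub B0[of m] by (auto simp: T_def finite_subset)
  moreover have "bdd_below T" unfolding T_def by (rule bdd_belowI[of _ 0]) auto
  ultimately have "Inf T \<le> B m" by (rule cInf_lower)
  moreover have "0 \<le> Inf T" using \<open>B m \<in> T\<close> by (intro cInf_greatest) (auto simp: T_def)
  ultimately show ?thesis by (simp add: decr_rearr_def T_def)
qed

lemma sym_index_inj: "inj sym_index"
  unfolding sym_index_def inj_def by (auto split: if_splits) presburger

lemma abs_sym_index: "\<bar>sym_index n\<bar> = int ((n + 1) div 2)"
  unfolding sym_index_def by auto

lemma sym_rearr_sym_index: "sym_rearr a (sym_index n) = decr_rearr (\<lambda>j. cmod (a j)) n"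
  unfolding sym_rearr_def using sym_index_inj by (simp add: inj_eq)

definition J_series :: "real \<Rightarrow> (int \<Rightarrow> complex) \<Rightarrow> nat \<Rightarrow> real" where
  "J_series p a n = (let k = sym_index n in
      (real_of_int (\<bar>k\<bar> + 1)) powr (p - 2) * (sym_rearr a k) powr p)"

lemma J_series_nonneg: "0 \<le> J_series p a n"
  by (simp add: J_series_def Let_def)

lemma J_series_le_majorant:
  fixes a :: "int \<Rightarrow> complex" and B :: "nat \<Rightarrow> real"
  assumes p: "0 \<le> p" and aB: "\<And>k. cmod (a k) \<le> B (nat \<bar>k\<bar>)"
    and B0: "\<And>m. 0 \<le> B m" and B: "antimono B"
  shows "J_series p a n \<le> real ((n + 1) div 2 + 1) powr (p - 2) * B ((n + 1) div 2) powr p"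
proof -
  define m where "m = (n + 1) div 2"
  have rearr: "0 \<le> decr_rearr (\<lambda>j. cmod (a j)) n \<and> decr_rearr (\<lambda>j. cmod (a j)) n \<le> B m"
    by (rule decr_rearr_le_majorant[OF aB B0 B]) (simp add: m_def)
  have "J_series p a n = real (m + 1) powr (p - 2) * decr_rearr (\<lambda>j. cmod (a j)) n powr p"
    unfolding J_series_def Let_def abs_sym_index sym_rearr_sym_index m_def by (simp add: add.commute)
  also have "\<dots> \<le> real (m + 1) powr (p - 2) * B m powr p"
    using rearr p by (intro mult_left_mono powr_mono2) auto
  finally show ?thesis by (simp add: m_def)
qed

lemma J_series_partial_le:
  fixes a :: "int \<Rightarrow> complex" and B :: "nat \<Rightarrow> real"
  assumes p: "0 \<le> p" and aB: "\<And>k. cmod (a k) \<le> B (nat \<bar>k\<bar>)"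
    and B0: "\<And>m. 0 \<le> B m" and B: "antimono B"
  shows "(\<Sum>n<N. J_series p a n)
           \<le> 2 * 2 powr \<bar>p - 2\<bar> * (\<Sum>j\<le>N. 2 powr (real j * (p - 1)) * B (2 ^ j div 2) powr p)"
proof -
  define h where "h m = real (m + 1) powr (p - 2) * B m powr p" for m
  have "(\<Sum>n<N. J_series p a n) \<le> (\<Sum>n<N. h ((n + 1) div 2))"
    unfolding h_def by (intro sum_mono J_series_le_majorant[OF p aB B0 B])
  also have "\<dots> \<le> 2 * (\<Sum>m<2 ^ N. h m)"
    by (rule sum_half_index_le) (simp add: h_def)
  also have "\<dots> \<le> 2 * 2 powr \<bar>p - 2\<bar> * (\<Sum>j\<le>N. 2 powr (real j * (p - 1)) * B (2 ^ j div 2) powr p)"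
    using weighted_sum_dyadic_le[OF p B0 B, of N] by (simp add: h_def)
  finally show ?thesis .
qed

section \<open>Partial variation sums\<close>

definition delta_sum :: "(int \<Rightarrow> complex) \<Rightarrow> nat \<Rightarrow> real" where
  "delta_sum a n = (\<Sum>m\<in>{m::int. \<bar>m\<bar> < int n}. delta_coeff a m)"

lemma finite_abs_less [simp]: "finite {m::int. \<bar>m\<bar> < c}"
proof -
  have "{m::int. \<bar>m\<bar> < c} = {- c<..<c}" by auto
  then show ?thesis by simp
qed

lemma delta_coeff_nonneg: "0 \<le> delta_coeff a m"
  by (simp add: delta_coeff_def)

lemma Theta_nonneg: "0 \<le> Theta a k"
  unfolding Theta_def by (intro sum_nonneg delta_coeff_nonneg)

lemma delta_sum_mono: "mono (delta_sum a)"
  unfolding delta_sum_def by (intro monoI sum_mono2) (auto simp: delta_coeff_nonneg)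

lemma sum_Theta_eq_delta_sum: "(\<Sum>i<j. Theta a i) = delta_sum a (2 ^ j div 2)"
proof (induction j)
  case (Suc j)
  have split: "{m::int. \<bar>m\<bar> < int (2 ^ Suc j div 2)} =
      {m. \<bar>m\<bar> < int (2 ^ j div 2)} \<union> {m. 2 ^ j div 2 \<le> \<bar>m\<bar> \<and> \<bar>m\<bar> < 2 ^ j}"
    by (auto simp: zdiv_int)
  have fin: "finite {m::int. 2 ^ j div 2 \<le> \<bar>m\<bar> \<and> \<bar>m\<bar> < 2 ^ j}"
    by (rule finite_subset[of _ "{m. \<bar>m\<bar> < 2 ^ j}"]) auto
  have "delta_sum a (2 ^ Suc j div 2) = delta_sum a (2 ^ j div 2) + Theta a j"
    unfolding delta_sum_def Theta_def split by (subst sum.union_disjoint) (auto simp: fin zdiv_int)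
  then show ?case using Suc by simp
qed (simp add: delta_sum_def)

lemma delta_sum_le_suminf_Theta:
  assumes "summable (Theta a)"
  shows "delta_sum a n \<le> (\<Sum>i. Theta a i)"
proof -
  have "delta_sum a n \<le> delta_sum a (2 ^ Suc n div 2)"
    using less_exp[of n] by (intro monoD[OF delta_sum_mono]) simp
  also have "\<dots> = (\<Sum>i<Suc n. Theta a i)" by (simp only: sum_Theta_eq_delta_sum)
  also have "\<dots> \<le> (\<Sum>i. Theta a i)" by (rule sum_le_suminf[OF assms]) (auto simp: Theta_nonneg)
  finally show ?thesis .
qed

lemma suminf_Theta_shift:
  assumes "summable (Theta a)"
  shows "(\<Sum>d. Theta a (d + j)) = (\<Sum>i. Theta a i) - delta_sum a (2 ^ j div 2)"
  by (simp add: suminf_minus_initial_segment[OF assms] sum_Theta_eq_delta_sum)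

lemma delta_sum_Suc_ge: "delta_sum a n + delta_coeff a (int n) \<le> delta_sum a (Suc n)"
proof -
  have "delta_sum a n + delta_coeff a (int n) = (\<Sum>m\<in>insert (int n) {m. \<bar>m\<bar> < int n}. delta_coeff a m)"
    unfolding delta_sum_def by (subst sum.insert) auto
  also have "\<dots> \<le> delta_sum a (Suc n)"
    unfolding delta_sum_def by (rule sum_mono2) (auto simp: delta_coeff_nonneg)
  finally show ?thesis .
qed

lemma norm_diff_le_delta_sum:
  assumes "k \<le> M"
  shows "cmod (a (int M) - a (int k)) \<le> delta_sum a M - delta_sum a k"
  using assms
proof (induction M)
  case (Suc M)
  show ?case
  proof (cases "k = Suc M")
    case False
    then have IH: "cmod (a (int M) - a (int k)) \<le> delta_sum a M - delta_sum a k" using Suc by simp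
    have step: "cmod (a (int M) - a (int M + 1)) \<le> delta_coeff a (int M)"
      by (cases "M = 0") (auto simp: delta_coeff_def)
    have "cmod (a (int (Suc M)) - a (int k))
        \<le> cmod (a (int M) - a (int M + 1)) + cmod (a (int M) - a (int k))"
      using norm_triangle_ineq4[of "a (int M) - a (int k)" "a (int M) - a (int M + 1)"]
      by (simp add: add.commute)
    also have "\<dots> \<le> delta_sum a (Suc M) - delta_sum a k"
      using IH step delta_sum_Suc_ge[of a M] by simp
    finally show ?thesis .
  qed simp
qed simp

lemma delta_coeff_reflect: "delta_coeff (\<lambda>m. a (- m)) m = delta_coeff a (- m)"
  unfolding delta_coeff_def
  by (auto simp: algebra_simps) (metis diff_conv_add_uminus add.commute)+

lemma delta_sum_reflect: "delta_sum (\<lambda>m. a (- m)) n = delta_sum a n"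
  unfolding delta_sum_def delta_coeff_reflect
  by (rule sum.reindex_bij_witness[of _ uminus uminus]) auto

section \<open>Cesaro means and the coefficient bound\<close>

lemma cesaro_power_tendsto_zero:
  fixes c :: complex
  assumes "norm c = 1" "c \<noteq> 1"
  shows "(\<lambda>L. (\<Sum>j<L. c ^ j) / of_nat L) \<longlonglongrightarrow> 0"
proof (rule Lim_null_comparison)
  show "\<forall>\<^sub>F L in sequentially. norm ((\<Sum>j<L. c ^ j) / of_nat L) \<le> (2 / norm (1 - c)) / real L"
  proof (intro always_eventually allI)
    fix L :: nat
    have "norm (1 - c ^ L) \<le> norm (1::complex) + norm (c ^ L)" by (rule norm_triangle_ineq4)
    then have "norm (1 - c ^ L) \<le> 2" using assms by (simp add: norm_power)
    then have "norm (\<Sum>j<L. c ^ j) \<le> 2 / norm (1 - c)"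
      using assms by (simp add: sum_gp_strict norm_divide divide_right_mono)
    then show "norm ((\<Sum>j<L. c ^ j) / of_nat L) \<le> (2 / norm (1 - c)) / real L"
      unfolding norm_divide norm_of_nat by (rule divide_right_mono) simp
  qed
  show "(\<lambda>L. (2 / norm (1 - c)) / real L) \<longlonglongrightarrow> 0"
    by (intro tendsto_divide_0[OF tendsto_const] filterlim_at_top_imp_at_infinity[OF filterlim_real_sequentially])
qed

lemma exp_i_neq_1:
  fixes x :: real
  assumes "x \<in> {-pi..pi}" "x \<noteq> 0"
  shows "exp (\<i> * of_real x) \<noteq> 1"
proof
  assume "exp (\<i> * of_real x) = 1"
  then obtain n :: int where n: "x = 2 * pi * of_int n"
    by (auto simp: exp_eq_1)
  with assms have "n \<noteq> 0" by auto
  then have "\<bar>x\<bar> \<ge> 2 * pi" using n by (simp add: abs_mult)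
  then show False using assms pi_gt_zero by auto
qed

lemma cesaro_integral_tendsto_zero:
  fixes G :: "real \<Rightarrow> complex" and s :: real
  assumes G: "integrable lborel G" and supp: "\<And>x. x \<notin> {-pi..pi} \<Longrightarrow> G x = 0"
    and s: "s = 1 \<or> s = -1"
  shows "(\<lambda>L. integral\<^sup>L lborel (\<lambda>x. G x * ((\<Sum>j<L. exp (\<i> * of_real (s * x)) ^ j) / of_nat L)))
           \<longlonglongrightarrow> 0"
proof -
  define S where "S L x = G x * ((\<Sum>j<L. exp (\<i> * of_real (s * x)) ^ j) / of_nat L)" for L :: nat and x
  have "(\<lambda>L. integral\<^sup>L lborel (S L)) \<longlonglongrightarrow> integral\<^sup>L lborel (\<lambda>x::real. 0)"
  proof (rule Bochner_Integration.integral_dominated_convergence)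
    show "S L \<in> borel_measurable lborel" for L
      unfolding S_def using borel_measurable_integrable[OF G] by measurable
    show "integrable lborel (\<lambda>x. norm (G x))" using G by simp
    show "AE x in lborel. norm (S L x) \<le> norm (G x)" for L
    proof (intro AE_I2)
      fix x :: real
      have "norm (\<Sum>j<L. exp (\<i> * of_real (s * x)) ^ j) \<le> real L"
        using norm_sum[of "\<lambda>j. exp (\<i> * of_real (s * x)) ^ j" "{..<L}"] by (simp add: norm_power)
      then have "norm ((\<Sum>j<L. exp (\<i> * of_real (s * x)) ^ j) / of_nat L) \<le> 1"
        by (cases "L = 0") (auto simp: norm_divide field_simps)
      then show "norm (S L x) \<le> norm (G x)"
        unfolding S_def norm_mult by (rule mult_left_le) simp
    qed
    show "AE x in lborel. (\<lambda>L. S L x) \<longlonglongrightarrow> 0"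
      using AE_lborel_singleton[of 0]
    proof eventually_elim
      case (elim x)
      show ?case
      proof (cases "x \<in> {-pi..pi}")
        case True
        with elim s have "exp (\<i> * of_real (s * x)) \<noteq> 1" by (intro exp_i_neq_1) auto
        then show ?thesis
          unfolding S_def by (intro tendsto_mult_right_zero cesaro_power_tendsto_zero) simp_all
      qed (simp add: S_def supp)
    qed
  qed simp
  then show ?thesis by (simp only: S_def [abs_def] integral_zero)
qed

lemma exp_fourier_kernel_shift:
  fixes x :: real and N s :: int and j :: nat
  shows "exp (- \<i> * of_int (N + s * int j) * of_real x) =
         exp (- \<i> * of_int N * of_real x) * exp (\<i> * of_real ((- real_of_int s) * x)) ^ j"
proof -
  have "exp (- \<i> * of_int N * of_real x) * exp (\<i> * of_real ((- real_of_int s) * x)) ^ j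
      = exp (- \<i> * of_int N * of_real x + of_nat j * (\<i> * of_real ((- real_of_int s) * x)))"
    by (simp only: exp_of_nat_mult[symmetric] exp_add[symmetric])
  also have "- \<i> * of_int N * of_real x + of_nat j * (\<i> * of_real ((- real_of_int s) * x))
      = - \<i> * of_int (N + s * int j) * of_real x"
    by (simp add: algebra_simps)
  finally show ?thesis by simp
qed

lemma fourier_coeff_cesaro_tendsto_zero:
  fixes f :: "real \<Rightarrow> complex" and N s :: int
  assumes f: "set_integrable lborel {-pi..pi} f" and s: "s = 1 \<or> s = -1"
  shows "(\<lambda>L. (\<Sum>j<L. fourier_coeff f (N + s * int j)) / of_nat L) \<longlonglongrightarrow> 0"
proof -
  define G where "G x = indicator {-pi..pi} x *\<^sub>R f x * exp (- \<i> * of_int N * of_real x)" for x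
  define E where "E j x = exp (\<i> * of_real ((- real_of_int s) * x)) ^ j" for j :: nat and x :: real
  have Fi: "integrable lborel (\<lambda>x. indicator {-pi..pi} x *\<^sub>R f x)"
    using f unfolding set_integrable_def .
  have Gi: "integrable lborel G"
  proof (rule Bochner_Integration.integrable_bound[OF Fi])
    show "G \<in> borel_measurable lborel"
      unfolding G_def using borel_measurable_integrable[OF Fi] by measurable
  qed (auto simp: G_def norm_mult)
  have GEi: "integrable lborel (\<lambda>x. G x * E j x)" for j
  proof (rule Bochner_Integration.integrable_bound[OF Gi])
    show "(\<lambda>x. G x * E j x) \<in> borel_measurable lborel"
      unfolding E_def using borel_measurable_integrable[OF Gi] by measurable
  qed (auto simp: E_def norm_mult norm_power)
  have coeff: "fourier_coeff f (N + s * int j) = integral\<^sup>L lborel (\<lambda>x. G x * E j x) / (2 * pi)" for j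
    unfolding fourier_coeff_def set_lebesgue_integral_def exp_fourier_kernel_shift[of N s j]
    by (simp add: G_def E_def mult.assoc)
  have "(\<Sum>j<L. fourier_coeff f (N + s * int j)) / of_nat L
      = integral\<^sup>L lborel (\<lambda>x. G x * ((\<Sum>j<L. E j x) / of_nat L)) / (2 * pi)" for L
    by (simp add: coeff sum_distrib_left Bochner_Integration.integral_sum[OF GEi] flip: sum_divide_distrib)
  moreover have "(\<lambda>L. integral\<^sup>L lborel (\<lambda>x. G x * ((\<Sum>j<L. E j x) / of_nat L)) / (2 * pi)) \<longlonglongrightarrow> 0"
  proof (intro tendsto_divide_zero)
    have s': "- real_of_int s = 1 \<or> - real_of_int s = -1" using s by auto
    show "(\<lambda>L. integral\<^sup>L lborel (\<lambda>x. G x * ((\<Sum>j<L. E j x) / of_nat L))) \<longlonglongrightarrow> 0"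
      unfolding E_def by (rule cesaro_integral_tendsto_zero[OF Gi _ s']) (simp add: G_def)
  qed
  ultimately show ?thesis by simp
qed

lemma norm_le_of_cesaro_tendsto_zero:
  fixes a :: "nat \<Rightarrow> 'a :: real_normed_field"
  assumes cesaro: "(\<lambda>L. (\<Sum>j<L. a j) / of_nat L) \<longlonglongrightarrow> 0"
    and diff: "\<And>j. norm (a j - a 0) \<le> D"
  shows "norm (a 0) \<le> D"
proof (rule tendsto_le[OF trivial_limit_sequentially])
  show "(\<lambda>L. D + norm ((\<Sum>j<L. a j) / of_nat L)) \<longlonglongrightarrow> D"
    using tendsto_add[OF tendsto_const tendsto_norm[OF cesaro]] by simp
  have "norm (a 0) \<le> D + norm ((\<Sum>j<L. a j) / of_nat L)" if L: "L \<ge> 1" for L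
  proof -
    have "a 0 = (\<Sum>j<L. a 0 - a j) / of_nat L + (\<Sum>j<L. a j) / of_nat L"
      using L by (simp add: sum_subtractf field_simps)
    then have "norm (a 0) \<le> norm (\<Sum>j<L. a 0 - a j) / real L + norm ((\<Sum>j<L. a j) / of_nat L)"
      by (metis norm_triangle_ineq norm_divide norm_of_nat)
    moreover have "norm (\<Sum>j<L. a 0 - a j) \<le> real L * D"
      using norm_sum[of "\<lambda>j. a 0 - a j" "{..<L}"] sum_mono[of "{..<L}" "\<lambda>j. norm (a 0 - a j)" "\<lambda>_. D"]
      by (simp add: diff norm_minus_commute)
    then have "norm (\<Sum>j<L. a 0 - a j) / real L \<le> D" using L by (simp add: divide_le_eq mult.commute)
    ultimately show ?thesis by linarith
  qed
  then show "\<forall>\<^sub>F L in sequentially. norm (a 0) \<le> D + norm ((\<Sum>j<L. a j) / of_nat L)"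
    by (auto simp: eventually_sequentially)
qed (rule tendsto_const)

lemma norm_le_sub_delta_sum:
  fixes a :: "int \<Rightarrow> complex"
  assumes cesaro: "\<And>N s. s = 1 \<or> s = -1 \<Longrightarrow> (\<lambda>L. (\<Sum>j<L. a (N + s * int j)) / of_nat L) \<longlonglongrightarrow> 0"
    and T: "\<And>n. delta_sum a n \<le> T"
  shows "cmod (a k) \<le> T - delta_sum a (nat \<bar>k\<bar>)"
proof -
  have ray: "cmod (b (int n)) \<le> T - delta_sum b n"
    if "b = a \<or> b = (\<lambda>m. a (- m))" for b n
  proof -
    have Tb: "delta_sum b m \<le> T" for m using that T delta_sum_reflect[of a] by auto
    show ?thesis
    proof (rule norm_le_of_cesaro_tendsto_zero[where a = "\<lambda>j. b (int n + int j)", simplified])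
      show "(\<lambda>L. (\<Sum>j<L. b (int n + int j)) / of_nat L) \<longlonglongrightarrow> 0"
        using that cesaro[of 1 "int n"] cesaro[of "-1" "- int n"] by auto
      show "cmod (b (int n + int j) - b (int n)) \<le> T - delta_sum b n" for j
        using norm_diff_le_delta_sum[of n "n + j" b] Tb[of "n + j"] by simp
    qed
  qed
  show ?thesis
  proof (cases "k \<ge> 0")
    case True
    then show ?thesis using ray[of a "nat k"] by simp
  next
    case False
    then show ?thesis using ray[of "\<lambda>m. a (- m)" "nat (- k)"] by (simp add: delta_sum_reflect)
  qed
qed

section \<open>Comparison of the two series\<close>

definition I_series :: "real \<Rightarrow> (int \<Rightarrow> complex) \<Rightarrow> nat \<Rightarrow> real" where
  "I_series p a k = (2 powr (real k / conj_exp p) * Theta a k) powr p"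

lemma I_series_eq:
  "1 < p \<Longrightarrow> I_series p a = (\<lambda>k. ((2 powr ((p - 1) / p)) ^ k * Theta a k) powr p)"
  by (simp add: fun_eq_iff I_series_def conj_exp_def powr_powr mult.commute flip: powr_realpow)

lemma summable_Theta_of_I_series:
  assumes p: "1 < p" and summ: "summable (I_series p a)"
  shows "summable (Theta a)"
proof -
  define c where "c = 2 powr ((p - 1) / p)"
  have c: "1 < c" using p by (simp add: c_def)
  have "summable (\<lambda>k. (1 / c) ^ k * (c ^ k * Theta a k))"
    using summ c p by (intro summable_geometric_mult_of_powr) (auto simp: I_series_eq c_def Theta_nonneg)
  then show ?thesis using c by (simp add: power_one_over)
qed

lemma hardy_I_series:
  assumes p: "1 < p" and summ: "summable (I_series p a)"
  shows "(\<Sum>j\<le>L. 2 powr (real j * (p - 1)) * (\<Sum>d. Theta a (d + j)) powr p)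
           \<le> (1 - 2 powr (- ((p - 1) / p))) powr (- p) * (\<Sum>k. I_series p a k)"
proof -
  define c where "c = 2 powr ((p - 1) / p)"
  have c: "1 < c" using p by (simp add: c_def)
  have tail_nonneg: "0 \<le> (\<Sum>d. Theta a (d + j))" for j
    using summable_Theta_of_I_series[OF p summ]
    by (intro suminf_nonneg) (auto simp: Theta_nonneg summable_ignore_initial_segment)
  have "(c ^ j * (\<Sum>d. Theta a (d + j))) powr p
      = 2 powr (real j * (p - 1)) * (\<Sum>d. Theta a (d + j)) powr p" for j
    using p tail_nonneg by (simp add: c_def powr_mult powr_powr mult.commute flip: powr_realpow)
  moreover have "1 - 1 / c = 1 - 2 powr (- ((p - 1) / p))" by (simp add: c_def powr_minus_divide)
  moreover have "I_series p a = (\<lambda>k. (c ^ k * Theta a k) powr p)" using p by (simp add: I_series_eq c_def)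
  moreover have "(\<Sum>j\<le>L. (c ^ j * (\<Sum>d. Theta a (d + j))) powr p)
      \<le> (1 - 1 / c) powr (- p) * (\<Sum>k. (c ^ k * Theta a k) powr p)"
    using summ p by (intro tail_sum_hardy_inequality c) (auto simp: Theta_nonneg I_series_eq c_def)
  ultimately show ?thesis by simp
qed

lemma J_series_partial_le_I_series:
  fixes a :: "int \<Rightarrow> complex"
  assumes p: "1 < p"
    and cesaro: "\<And>N s. s = 1 \<or> s = -1 \<Longrightarrow> (\<lambda>L. (\<Sum>j<L. a (N + s * int j)) / of_nat L) \<longlonglongrightarrow> 0"
    and summ: "summable (I_series p a)"
  shows "(\<Sum>n<N. J_series p a n)
           \<le> 2 * 2 powr \<bar>p - 2\<bar> * (1 - 2 powr (- ((p - 1) / p))) powr (- p) * (\<Sum>k. I_series p a k)"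
proof -
  have \<Theta>: "summable (Theta a)" by (rule summable_Theta_of_I_series[OF p summ])
  define B where "B m = (\<Sum>i. Theta a i) - delta_sum a m" for m
  have B0: "0 \<le> B m" for m using delta_sum_le_suminf_Theta[OF \<Theta>] by (simp add: B_def)
  have B: "antimono B" unfolding B_def by (intro antimonoI) (simp add: monoD[OF delta_sum_mono])
  have aB: "cmod (a k) \<le> B (nat \<bar>k\<bar>)" for k
    unfolding B_def by (rule norm_le_sub_delta_sum[OF cesaro delta_sum_le_suminf_Theta[OF \<Theta>]])
  have tail: "B (2 ^ j div 2) = (\<Sum>d. Theta a (d + j))" for j
    by (simp add: B_def suminf_Theta_shift[OF \<Theta>])
  have "(\<Sum>n<N. J_series p a n)
      \<le> 2 * 2 powr \<bar>p - 2\<bar> * (\<Sum>j\<le>N. 2 powr (real j * (p - 1)) * B (2 ^ j div 2) powr p)"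
    using p by (intro J_series_partial_le aB B0 B) simp
  also have "\<dots> \<le> 2 * 2 powr \<bar>p - 2\<bar>
      * ((1 - 2 powr (- ((p - 1) / p))) powr (- p) * (\<Sum>k. I_series p a k))"
    unfolding tail by (intro mult_left_mono hardy_I_series[OF p summ]) simp
  finally show ?thesis by (simp only: mult.assoc)
qed

lemma lp_root_le_scaled:
  fixes g h :: "nat \<Rightarrow> real"
  assumes p: "0 < p" and C: "0 < C" and h: "\<And>n. 0 \<le> h n" and g: "\<And>n. 0 \<le> g n"
    and partial: "\<And>N. summable g \<Longrightarrow> (\<Sum>n<N. h n) \<le> C * suminf g"
  shows "lp_root p h \<le> ennreal (C powr (1 / p)) * lp_root p g"
proof (cases "summable g")
  case False
  then show ?thesis using C by (simp add: lp_root_def ennreal_mult_top)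
next
  case True
  have sh: "summable h" by (rule summableI_nonneg_bounded[OF h partial[OF True]])
  have "suminf h \<le> C * suminf g" by (rule suminf_le_const[OF sh partial[OF True]])
  then have "suminf h powr (1 / p) \<le> (C * suminf g) powr (1 / p)"
    using p by (intro powr_mono2) (auto intro: suminf_nonneg sh h)
  also have "\<dots> = C powr (1 / p) * suminf g powr (1 / p)"
    using C suminf_nonneg[OF True g] by (simp add: powr_mult)
  finally show ?thesis
    using True sh by (simp add: lp_root_def ennreal_leI flip: ennreal_mult)
qed

theorem mainTheorem9:
  fixes p :: real
  assumes "1 < p"
  shows "\<exists>C>0. \<forall>f :: real \<Rightarrow> complex.
           set_integrable lborel {-pi..pi} f \<longrightarrow> J_p_star p f \<le> ennreal C * I_p p f"
proof -
  define K where "K = 2 * 2 powr \<bar>p - 2\<bar> * (1 - 2 powr (- ((p - 1) / p))) powr (- p)"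
  have K: "0 < K" using assms unfolding K_def by (intro mult_pos_pos) simp_all
  show ?thesis
  proof (intro exI[of _ "K powr (1 / p)"] conjI allI impI)
    show "0 < K powr (1 / p)" using K by simp
    fix f :: "real \<Rightarrow> complex"
    assume f: "set_integrable lborel {-pi..pi} f"
    have "lp_root p (J_series p (fourier_coeff f))
        \<le> ennreal (K powr (1 / p)) * lp_root p (I_series p (fourier_coeff f))"
    proof (rule lp_root_le_scaled)
      show "(\<Sum>n<N. J_series p (fourier_coeff f) n) \<le> K * suminf (I_series p (fourier_coeff f))"
        if "summable (I_series p (fourier_coeff f))" for N
        unfolding K_def using assms that
        by (intro J_series_partial_le_I_series fourier_coeff_cesaro_tendsto_zero[OF f])
    qed (use assms K in \<open>simp_all add: J_series_nonneg I_series_def\<close>)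
    then show "J_p_star p f \<le> ennreal (K powr (1 / p)) * I_p p f"
      unfolding J_p_star_def I_p_def J_series_def [abs_def] I_series_def [abs_def] .
  qed
qed

end
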